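(* Let $R$ be a domain which is a D-K elementary divisor ring. Then $R$ is a ring of simple range 2.
   Context: All rings are associative with nonzero identity. For $x\in R$, $RxR$ denotes the two-sided ideal generated by $x$. A nonzero element $a\in R$ is invariant if $aR=Ra$. Two matrices $A,B$ over $R$ are equivalent if $B=PAQ$ for some invertible matrices $P,Q$ over $R$. $R$ is a D-K elementary divisor ring if every (rectangular) matrix $A$ over $R$ is equivalent to a matrix $\mathrm{diag}(\varepsilon_1,\dots,\varepsilon_r,0,\dots,0)$ such that $R\varepsilon_{i+1}R\subseteq \varepsilon_iR\cap R\varepsilon_i$ for all $i=1,\dots,r-1$ and $\varepsilon_1,\dots,\varepsilon_{r-1}$ are invariant elements. A ring $R$ is called a ring of simple range 2 if for all $a,b,c\in R$ with $c\neq 0$ and $RaR+RbR+RcR=R$ there exist $p,q\in R$ such that $R(pa+qb)R+RpcR=R$. *)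

theory Defs
  imports "Jordan_Normal_Form.Matrix"
begin

definition two_sided_ideal :: "'a::ring_1 \<Rightarrow> 'a set" where
  "two_sided_ideal x = {y. \<exists>(n::nat) r s. y = (\<Sum>i<n. r i * x * s i)}"

definition invariant_elem :: "'a::ring_1 \<Rightarrow> bool" where
  "invariant_elem a \<longleftrightarrow> a \<noteq> 0 \<and> {a * r | r. True} = {r * a | r. True}"

definition mat_equiv :: "'a::ring_1 mat \<Rightarrow> 'a mat \<Rightarrow> bool" where
  "mat_equiv A B \<longleftrightarrow> (\<exists>P Q. P \<in> carrier_mat (dim_row A) (dim_row A) \<and> invertible_mat P \<and>
      Q \<in> carrier_mat (dim_col A) (dim_col A) \<and> invertible_mat Q \<and> B = P * A * Q)"

definition diag_rect :: "nat \<Rightarrow> nat \<Rightarrow> nat \<Rightarrow> (nat \<Rightarrow> 'a::zero) \<Rightarrow> 'a mat" where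
  "diag_rect m n r e = mat m n (\<lambda>(i, j). if i = j \<and> i < r then e i else 0)"

definition DK_elementary_divisor_ring :: "'a::ring_1 itself \<Rightarrow> bool" where
  "DK_elementary_divisor_ring TYPE('a) \<longleftrightarrow>
    (\<forall>m n (A::'a mat). A \<in> carrier_mat m n \<longrightarrow>
      (\<exists>r e. r \<le> min m n \<and> mat_equiv A (diag_rect m n r e) \<and>
        (\<forall>i. Suc i < r \<longrightarrow>
           two_sided_ideal (e (Suc i)) \<subseteq> {e i * x | x. True} \<inter> {x * e i | x. True}) \<and>
        (\<forall>i. Suc i < r \<longrightarrow> invariant_elem (e i))))"

definition simple_range_2 :: "'a::ring_1 itself \<Rightarrow> bool" where
  "simple_range_2 TYPE('a) \<longleftrightarrow>
    (\<forall>a b c :: 'a. c \<noteq> 0 \<longrightarrow>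
       {u + v + w | u v w. u \<in> two_sided_ideal a \<and> v \<in> two_sided_ideal b \<and> w \<in> two_sided_ideal c} = UNIV \<longrightarrow>
       (\<exists>p q. {u + v | u v. u \<in> two_sided_ideal (p * a + q * b) \<and> v \<in> two_sided_ideal (p * c)} = UNIV))"

end

theory Submission
  imports Defs
begin

text \<open>Reduce \<open>A = [[a, c], [b, 0]]\<close> to \<open>P A Q = diag(d, e\<^sub>1)\<close>. Every entry of the diagonal form lies
  in \<open>R d R\<close>, hence so does every entry of \<open>A = P\<^sup>-\<^sup>1 (P A Q) Q\<^sup>-\<^sup>1\<close>; thus \<open>R a R + R b R + R c R = R\<close>
  forces \<open>R d R = R\<close>. With \<open>(p, q)\<close> the first row of \<open>P\<close>, the corner entry is
  \<open>d = (p a + q b) Q\<^sub>0\<^sub>0 + p c Q\<^sub>1\<^sub>0\<close>, which lies in \<open>R (p a + q b) R + R p c R\<close>.\<close>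

definition is_two_sided_ideal :: "'a::ring_1 set \<Rightarrow> bool" where
  "is_two_sided_ideal S \<longleftrightarrow>
     0 \<in> S \<and> (\<forall>x\<in>S. \<forall>y\<in>S. x + y \<in> S) \<and> (\<forall>x\<in>S. \<forall>r s. r * x * s \<in> S)"

lemma is_two_sided_ideal_sum:
  assumes "is_two_sided_ideal S" and "finite F" and "\<And>k. k \<in> F \<Longrightarrow> f k \<in> S"
  shows "sum f F \<in> S"
  using assms(2,3) by (induct F rule: finite_induct) (use assms(1) in \<open>auto simp: is_two_sided_ideal_def\<close>)

lemma is_two_sided_ideal_mult:
  assumes "is_two_sided_ideal S" and "x \<in> S"
  shows "r * x \<in> S" and "x * r \<in> S"
  using assms unfolding is_two_sided_ideal_def by (metis mult_1_right, metis mult_1_left)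

lemma is_two_sided_ideal_one_imp_UNIV:
  assumes "is_two_sided_ideal S" and "1 \<in> S"
  shows "S = UNIV"
  using is_two_sided_ideal_mult(1)[OF assms] by (metis UNIV_eq_I mult_1_right)

lemma is_two_sided_ideal_set_plus:
  assumes "is_two_sided_ideal A" and "is_two_sided_ideal B"
  shows "is_two_sided_ideal {u + v | u v. u \<in> A \<and> v \<in> B}"
  unfolding is_two_sided_ideal_def
proof safe
  show "\<exists>u v. 0 = u + v \<and> u \<in> A \<and> v \<in> B"
    using assms by (force simp: is_two_sided_ideal_def)
next
  fix u v u' v' assume "u \<in> A" "v \<in> B" "u' \<in> A" "v' \<in> B"
  with assms show "\<exists>u'' v''. u + v + (u' + v') = u'' + v'' \<and> u'' \<in> A \<and> v'' \<in> B"
    by (intro exI[of _ "u + u'"] exI[of _ "v + v'"]) (simp add: is_two_sided_ideal_def algebra_simps)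
next
  fix u v r s assume "u \<in> A" "v \<in> B"
  with assms show "\<exists>u' v'. r * (u + v) * s = u' + v' \<and> u' \<in> A \<and> v' \<in> B"
    by (intro exI[of _ "r * u * s"] exI[of _ "r * v * s"]) (simp add: is_two_sided_ideal_def algebra_simps)
qed

lemma sum_lessThan_add_split: "(\<Sum>i<m + n. f i) = (\<Sum>i<m. f i) + (\<Sum>i<(n::nat). f (m + i))"
  by (induct n) (simp_all add: add.assoc)

lemma two_sided_ideal_self: "x \<in> two_sided_ideal x"
  unfolding two_sided_ideal_def
  by (intro CollectI exI[of _ "1::nat"] exI[of _ "\<lambda>_. 1"]) simp

lemma two_sided_ideal_least:
  assumes "is_two_sided_ideal S" and "x \<in> S"
  shows "two_sided_ideal x \<subseteq> S"
  using assms unfolding two_sided_ideal_def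
  by (auto intro!: is_two_sided_ideal_sum simp: is_two_sided_ideal_def)

lemma is_two_sided_ideal_two_sided_ideal: "is_two_sided_ideal (two_sided_ideal x)"
  unfolding is_two_sided_ideal_def
proof (intro conjI ballI allI)
  show "0 \<in> two_sided_ideal x"
    unfolding two_sided_ideal_def by (intro CollectI exI[of _ "0::nat"]) simp
next
  fix y z assume "y \<in> two_sided_ideal x" "z \<in> two_sided_ideal x"
  then obtain m r s n r' s' where
    y: "y = (\<Sum>i<(m::nat). r i * x * s i)" and z: "z = (\<Sum>i<(n::nat). r' i * x * s' i)"
    unfolding two_sided_ideal_def by blast
  let ?r = "\<lambda>i. if i < m then r i else r' (i - m)" and ?s = "\<lambda>i. if i < m then s i else s' (i - m)"
  have concat: "(\<Sum>i<m + n. ?r i * x * ?s i) = y + z"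
    unfolding y z sum_lessThan_add_split by simp
  show "y + z \<in> two_sided_ideal x"
    unfolding two_sided_ideal_def by (intro CollectI exI) (rule concat[symmetric])
next
  fix y a b assume "y \<in> two_sided_ideal x"
  then obtain n r s where y: "y = (\<Sum>i<(n::nat). r i * x * s i)"
    unfolding two_sided_ideal_def by blast
  have scaled: "a * y * b = (\<Sum>i<n. (a * r i) * x * (s i * b))"
    unfolding y by (simp add: sum_distrib_left sum_distrib_right mult.assoc)
  show "a * y * b \<in> two_sided_ideal x"
    unfolding two_sided_ideal_def by (intro CollectI exI) (rule scaled)
qed

lemma two_sided_ideal_mono:
  assumes "y \<in> two_sided_ideal x"
  shows "two_sided_ideal y \<subseteq> two_sided_ideal x"
  by (rule two_sided_ideal_least[OF is_two_sided_ideal_two_sided_ideal assms])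

lemma two_sided_ideal_mult_right: "x * r \<in> two_sided_ideal x"
  using is_two_sided_ideal_mult(2)[OF is_two_sided_ideal_two_sided_ideal two_sided_ideal_self] .

lemma is_two_sided_ideal_UNIV_if_generators:
  assumes "is_two_sided_ideal S" and "a \<in> S" "b \<in> S" "c \<in> S"
    and "{u + v + w | u v w. u \<in> two_sided_ideal a \<and> v \<in> two_sided_ideal b \<and>
           w \<in> two_sided_ideal c} = UNIV"
  shows "S = UNIV"
proof -
  obtain u v w where one: "1 = u + v + w"
    and "u \<in> two_sided_ideal a" "v \<in> two_sided_ideal b" "w \<in> two_sided_ideal c"
    using UNIV_I[where x = "1 :: 'a", folded assms(5)] by blast
  then have "u \<in> S" "v \<in> S" "w \<in> S"
    using two_sided_ideal_least[OF assms(1)] assms(2-4) by blast+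
  then have "1 \<in> S"
    using assms(1) unfolding one is_two_sided_ideal_def by blast
  with assms(1) show ?thesis
    by (rule is_two_sided_ideal_one_imp_UNIV)
qed

lemma mult_mat_entries_in_ideal_left:
  assumes "is_two_sided_ideal S"
    and "\<And>k l. k < dim_row A \<Longrightarrow> l < dim_col A \<Longrightarrow> A $$ (k, l) \<in> S"
    and "dim_col A = dim_row B" and "i < dim_row A" and "j < dim_col B"
  shows "(A * B) $$ (i, j) \<in> S"
  using assms by (auto simp: scalar_prod_def intro!: is_two_sided_ideal_sum is_two_sided_ideal_mult(2))

lemma mult_mat_entries_in_ideal_right:
  assumes "is_two_sided_ideal S"
    and "\<And>k l. k < dim_row B \<Longrightarrow> l < dim_col B \<Longrightarrow> B $$ (k, l) \<in> S"
    and "dim_col A = dim_row B" and "i < dim_row A" and "j < dim_col B"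
  shows "(A * B) $$ (i, j) \<in> S"
  using assms by (auto simp: scalar_prod_def intro!: is_two_sided_ideal_sum is_two_sided_ideal_mult(1))

lemma invertible_mat_obtain_inverse:
  assumes "A \<in> carrier_mat n n" and "invertible_mat A"
  obtains B where "B \<in> carrier_mat n n" and "A * B = 1\<^sub>m n" and "B * A = 1\<^sub>m n"
proof -
  from assms obtain B where AB: "A * B = 1\<^sub>m n" and BA: "B * A = 1\<^sub>m (dim_row B)"
    unfolding invertible_mat_def inverts_mat_def by auto
  have "B \<in> carrier_mat n n"
    using arg_cong[OF AB, of dim_col] arg_cong[OF BA, of dim_col] assms(1) by auto
  with AB BA that show ?thesis by auto
qed

lemma mat_equiv_inverse:
  assumes "A \<in> carrier_mat m n" and "mat_equiv A B"
  obtains P' Q' where "P' \<in> carrier_mat m m" and "Q' \<in> carrier_mat n n" and "A = P' * B * Q'"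
proof -
  from assms obtain P Q where P: "P \<in> carrier_mat m m" "invertible_mat P"
    and Q: "Q \<in> carrier_mat n n" "invertible_mat Q" and B: "B = P * A * Q"
    unfolding mat_equiv_def by auto
  obtain P' where P': "P' \<in> carrier_mat m m" "P' * P = 1\<^sub>m m"
    using invertible_mat_obtain_inverse[OF P] by metis
  obtain Q' where Q': "Q' \<in> carrier_mat n n" "Q * Q' = 1\<^sub>m n"
    using invertible_mat_obtain_inverse[OF Q] by metis
  have PA: "P * A \<in> carrier_mat m n"
    using P(1) assms(1) by simp
  have "P' * B * Q' = (P' * (P * A) * Q) * Q'"
    unfolding B using assoc_mult_mat[OF P'(1) PA Q(1)] by simp
  also have "\<dots> = A * Q * Q'"
    using assoc_mult_mat[OF P'(1) P(1) assms(1)] P'(2) assms(1) by simp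
  also have "\<dots> = A"
    using assoc_mult_mat[OF assms(1) Q(1) Q'(1)] Q'(2) assms(1) by simp
  finally show ?thesis
    using that P' Q' by metis
qed

lemma mat_equiv_entries_in_ideal:
  assumes "is_two_sided_ideal S" and "mat_equiv A B"
    and "A \<in> carrier_mat m n" and "B \<in> carrier_mat m n"
    and "\<And>k l. k < m \<Longrightarrow> l < n \<Longrightarrow> B $$ (k, l) \<in> S"
    and "i < m" and "j < n"
  shows "A $$ (i, j) \<in> S"
proof -
  obtain P' Q' where P': "P' \<in> carrier_mat m m" and Q': "Q' \<in> carrier_mat n n" and A: "A = P' * B * Q'"
    using mat_equiv_inverse[OF assms(3,2)] by metis
  have P'B_entries: "(P' * B) $$ (k, l) \<in> S" if "k < dim_row (P' * B)" "l < dim_col (P' * B)" for k l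
    by (rule mult_mat_entries_in_ideal_right[OF assms(1)]) (use assms(4,5) that P' in auto)
  show ?thesis
    unfolding A
    by (rule mult_mat_entries_in_ideal_left[OF assms(1) P'B_entries]) (use assms(4,6,7) P' Q' in auto)
qed

lemma divisor_chain_in_two_sided_ideal:
  assumes "\<And>k. Suc k < r \<Longrightarrow> e (Suc k) \<in> two_sided_ideal (e k)" and "i < r"
  shows "e i \<in> two_sided_ideal (e 0)"
  using \<open>i < r\<close>
proof (induction i)
  case 0
  show ?case by (rule two_sided_ideal_self)
next
  case (Suc i)
  then show ?case
    using assms(1) two_sided_ideal_mono by (metis Suc_lessD subsetD)
qed

lemma diag_rect_entries_in_two_sided_ideal:
  assumes "\<And>k. Suc k < r \<Longrightarrow> e (Suc k) \<in> two_sided_ideal (e k)"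
    and "0 < m" and "0 < n" and "i < m" and "j < n"
  shows "diag_rect m n r e $$ (i, j) \<in> two_sided_ideal (diag_rect m n r e $$ (0, 0))"
proof -
  have "e k \<in> two_sided_ideal (e 0)" if "k < r" for k
    using assms(1) that by (rule divisor_chain_in_two_sided_ideal)
  moreover have "0 \<in> two_sided_ideal x" for x :: 'a
    using is_two_sided_ideal_two_sided_ideal unfolding is_two_sided_ideal_def by blast
  ultimately show ?thesis
    using assms(2-5) by (simp add: diag_rect_def)
qed

lemma corner_entry_mult_2x2:
  fixes a b c :: "'a::ring_1"
  assumes "P \<in> carrier_mat 2 2" and "Q \<in> carrier_mat 2 2"
  shows "(P * mat 2 2 (\<lambda>(i, j). if i = 0 then (if j = 0 then a else c) else (if j = 0 then b else 0)) * Q) $$ (0, 0)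
    = (P $$ (0, 0) * a + P $$ (0, 1) * b) * Q $$ (0, 0) + (P $$ (0, 0) * c) * Q $$ (1, 0)"
  using assms by (simp add: scalar_prod_def numeral_2_eq_2 lessThan_Suc atLeast0LessThan algebra_simps)

lemma DK_elementary_divisor_ring_entries_in_corner_ideal:
  fixes A :: "'a::ring_1 mat"
  assumes "DK_elementary_divisor_ring TYPE('a)" and A: "A \<in> carrier_mat m n" and "0 < m" and "0 < n"
  obtains P Q where "P \<in> carrier_mat m m" and "Q \<in> carrier_mat n n"
    and "\<And>i j. i < m \<Longrightarrow> j < n \<Longrightarrow> A $$ (i, j) \<in> two_sided_ideal ((P * A * Q) $$ (0, 0))"
proof -
  obtain r e where chain: "\<forall>i. Suc i < r \<longrightarrow>
      two_sided_ideal (e (Suc i)) \<subseteq> {e i * x | x. True} \<inter> {x * e i | x. True}"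
    and equiv: "mat_equiv A (diag_rect m n r e)"
    using assms unfolding DK_elementary_divisor_ring_def by blast
  obtain P Q where P: "P \<in> carrier_mat m m" and Q: "Q \<in> carrier_mat n n"
    and PAQ: "diag_rect m n r e = P * A * Q"
    using equiv A unfolding mat_equiv_def by auto
  have chain': "e (Suc k) \<in> two_sided_ideal (e k)" if k: "Suc k < r" for k
  proof -
    obtain x where "e (Suc k) = e k * x"
      using chain[rule_format, OF k] two_sided_ideal_self[of "e (Suc k)"] by blast
    then show ?thesis by (simp add: two_sided_ideal_mult_right)
  qed
  have D_entries: "diag_rect m n r e $$ (k, l) \<in> two_sided_ideal (diag_rect m n r e $$ (0, 0))"
    if "k < m" "l < n" for k l
    by (rule diag_rect_entries_in_two_sided_ideal[where r = r and e = e, OF chain'])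
      (use assms(3,4) that in simp_all)
  have "A $$ (i, j) \<in> two_sided_ideal ((P * A * Q) $$ (0, 0))" if "i < m" "j < n" for i j
    unfolding PAQ[symmetric]
    by (rule mat_equiv_entries_in_ideal[OF is_two_sided_ideal_two_sided_ideal equiv A _ D_entries])
      (use that in \<open>simp_all add: diag_rect_def\<close>)
  with P Q that show ?thesis by blast
qed

theorem theorem3p3:
  assumes "DK_elementary_divisor_ring TYPE('a::ring_1_no_zero_divisors)"
  shows "simple_range_2 TYPE('a)"
  unfolding simple_range_2_def
proof (intro allI impI)
  fix a b c :: 'a
  assume unit_ideal: "{u + v + w | u v w. u \<in> two_sided_ideal a \<and> v \<in> two_sided_ideal b \<and>
      w \<in> two_sided_ideal c} = UNIV"
  define A :: "'a mat" where
    "A = mat 2 2 (\<lambda>(i, j). if i = 0 then (if j = 0 then a else c) else (if j = 0 then b else 0))"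
  obtain P Q where P: "P \<in> carrier_mat 2 2" and Q: "Q \<in> carrier_mat 2 2"
    and A_entries: "\<And>i j. i < 2 \<Longrightarrow> j < 2 \<Longrightarrow> A $$ (i, j) \<in> two_sided_ideal ((P * A * Q) $$ (0, 0))"
    using DK_elementary_divisor_ring_entries_in_corner_ideal[OF assms, of A 2 2] unfolding A_def by auto
  define p q where "p = P $$ (0, 0)" and "q = P $$ (0, 1)"
  have "two_sided_ideal ((P * A * Q) $$ (0, 0)) = UNIV"
    by (rule is_two_sided_ideal_UNIV_if_generators[OF is_two_sided_ideal_two_sided_ideal _ _ _ unit_ideal])
      (use A_entries[of 0 0] A_entries[of 1 0] A_entries[of 0 1] in \<open>simp_all add: A_def\<close>)
  moreover have "(P * A * Q) $$ (0, 0) = (p * a + q * b) * Q $$ (0, 0) + (p * c) * Q $$ (1, 0)"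
    unfolding A_def p_def q_def by (rule corner_entry_mult_2x2[OF P Q])
  then have "two_sided_ideal ((P * A * Q) $$ (0, 0)) \<subseteq>
      {u + v | u v. u \<in> two_sided_ideal (p * a + q * b) \<and> v \<in> two_sided_ideal (p * c)}"
    by (intro two_sided_ideal_least is_two_sided_ideal_set_plus is_two_sided_ideal_two_sided_ideal)
      (auto intro: two_sided_ideal_mult_right)
  ultimately show "\<exists>p q. {u + v | u v. u \<in> two_sided_ideal (p * a + q * b) \<and> v \<in> two_sided_ideal (p * c)} = UNIV"
    by blast
qed

end
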